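(* Let $0<p<1$, $n\ge2$, and let $X_1,\dots,X_n$ be i.i.d. with density $f_p(x)=px^{p-1}$, $0<x\le1$. Let $Q=\sum_{i=1}^n(X_i-\overline X)^2$. Then as $x\to0^+$, $$P\{Q\le x\}=O\big(x^{\min(pn,\,n-1)/2}\big)\ \text{ if } np\ne n-1,\qquad P\{Q\le x\}=O\big(x^{(n-1)/2}\ln(1/x)\big)\ \text{ if } np=n-1.$$ *)

theory Defs
  imports "HOL-Probability.Probability" "HOL-Library.Landau_Symbols"
begin

definition fp :: "real \<Rightarrow> real \<Rightarrow> ennreal" where
  "fp p x = (if 0 < x \<and> x \<le> 1 then ennreal (p * x powr (p - 1)) else 0)"

definition sample_Q :: "nat \<Rightarrow> (nat \<Rightarrow> real) \<Rightarrow> real" where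
  "sample_Q n x = (\<Sum>i<n. (x i - (\<Sum>j<n. x j) / real n)\<^sup>2)"

end

theory Submission
  imports Defs
begin

(*
  If Q = sum_i (X_i - mean)^2 <= x, every X_i lies within d = 2 sqrt x of X_0.
  Cover (-inf,1] by the cells [0,3d) (for k <= 1) and [(k-1)d,(k+2)d) (for 2 <= k <= 1/d),
  chosen so that a cluster of width d around X_0 always fits into one cell.  The
  probability that a single X_i falls into cell k is at most (3d)^p for k <= 1 and at most
  3p d^p (k-1)^(p-1) for k >= 2, because the density is decreasing.  By independence and
  a union bound over the cells,
     P{Q <= x} <= 2 (3d)^(pn) + (3p)^n d^(pn) * sum_{j=1}^{1/d} j^(-a),   a = n(1-p).
  The power sum is bounded (a > 1), of order d^(a-1) (a < 1), or of order ln(1/d) (a = 1);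
  comparing a sum of a decreasing function with an antiderivative via the mean value
  theorem gives all three bounds.  Since pn + a = n, this yields the three regimes.
*)

section \<open>Sums of negative powers\<close>

definition power_sum :: "real \<Rightarrow> nat \<Rightarrow> real" where
  "power_sum a m = (\<Sum>j = 1..m. real j powr (- a))"

lemma power_sum_nonneg: "0 \<le> power_sum a m"
  by (simp add: power_sum_def sum_nonneg)

lemma increment_ge_derivative:
  fixes F f :: "real \<Rightarrow> real"
  assumes "x < y"
    and deriv: "\<And>t. x \<le> t \<Longrightarrow> t \<le> y \<Longrightarrow> (F has_real_derivative f t) (at t)"
    and antimono: "\<And>t. x \<le> t \<Longrightarrow> t \<le> y \<Longrightarrow> f y \<le> f t"
  shows "(y - x) * f y \<le> F y - F x"
proof -
  obtain z where z: "x < z" "z < y" "F y - F x = (y - x) * f z"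
    using MVT2[OF \<open>x < y\<close> deriv] by blast
  show ?thesis
    unfolding z(3) using z assms(1) by (intro mult_left_mono antimono) auto
qed

lemma power_sum_le_antiderivative:
  fixes F :: "real \<Rightarrow> real"
  assumes "0 \<le> a"
    and deriv: "\<And>t. 1 \<le> t \<Longrightarrow> (F has_real_derivative t powr (- a)) (at t)"
    and "1 \<le> m"
  shows "power_sum a m \<le> 1 + F (real m) - F 1"
  using \<open>1 \<le> m\<close>
proof (induction m rule: nat_induct_at_least)
  case base
  show ?case by (simp add: power_sum_def)
next
  case (Suc m)
  have "(real (Suc m) - real m) * real (Suc m) powr (- a) \<le> F (real (Suc m)) - F (real m)"
  proof (rule increment_ge_derivative)
    fix t assume "real m \<le> t" "t \<le> real (Suc m)"
    then show "(F has_real_derivative t powr (- a)) (at t)"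
      and "real (Suc m) powr (- a) \<le> t powr (- a)"
      using Suc.hyps assms by (auto intro!: deriv powr_mono2')
  qed simp
  then show ?case
    using Suc.IH by (simp add: power_sum_def)
qed

lemma powr_antiderivative:
  assumes "a \<noteq> 1" "0 < t"
  shows "((\<lambda>t. t powr (1 - a) / (1 - a)) has_real_derivative t powr (- a)) (at t)"
  by (rule derivative_eq_intros refl | use assms in simp)+

lemma power_sum_le_powr:
  assumes "0 \<le> a" "a \<noteq> 1" "1 \<le> m"
  shows "power_sum a m \<le> 1 + (real m powr (1 - a) - 1) / (1 - a)"
proof -
  have "power_sum a m \<le> 1 + real m powr (1 - a) / (1 - a) - 1 / (1 - a)"
    using assms
    by (intro power_sum_le_antiderivative[where F = "\<lambda>t. t powr (1 - a) / (1 - a)", simplified]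
        powr_antiderivative) auto
  then show ?thesis
    by (simp add: diff_divide_distrib)
qed

lemma power_sum_gt1:
  assumes "1 < a"
  shows "power_sum a m \<le> a / (a - 1)"
proof (cases "m = 0")
  case True
  then show ?thesis using assms by (simp add: power_sum_def)
next
  case False
  have "power_sum a m \<le> 1 + (real m powr (1 - a) - 1) / (1 - a)"
    using power_sum_le_powr[of a m] assms False by simp
  also have "\<dots> = 1 + (1 - real m powr (1 - a)) / (a - 1)"
    using assms by (simp add: divide_simps) argo
  also have "\<dots> \<le> 1 + 1 / (a - 1)"
    using assms by (simp add: divide_right_mono)
  also have "\<dots> = a / (a - 1)"
    using assms by (simp add: field_simps)
  finally show ?thesis .
qed

lemma power_sum_lt1:
  assumes "0 \<le> a" "a < 1" "real m \<le> t"
  shows "power_sum a m \<le> t powr (1 - a) / (1 - a)"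
proof (cases "m = 0")
  case True
  then show ?thesis using assms by (simp add: power_sum_def)
next
  case False
  have "power_sum a m \<le> 1 + (real m powr (1 - a) - 1) / (1 - a)"
    using power_sum_le_powr[of a m] assms False by simp
  also have "\<dots> \<le> real m powr (1 - a) / (1 - a)"
    using assms by (simp add: divide_simps)
  also have "\<dots> \<le> t powr (1 - a) / (1 - a)"
    using assms by (intro divide_right_mono powr_mono2) auto
  finally show ?thesis .
qed

lemma power_sum_eq1:
  assumes "real m \<le> t" "1 \<le> t"
  shows "power_sum 1 m \<le> 1 + ln t"
proof (cases "m = 0")
  case True
  then show ?thesis using assms by (simp add: power_sum_def)
next
  case False
  have "(ln has_real_derivative t powr (- 1)) (at t)" if "1 \<le> t" for t
    using that by (auto intro!: derivative_eq_intros simp: powr_minus field_simps)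
  then have "power_sum 1 m \<le> 1 + ln (real m) - ln 1"
    using False by (intro power_sum_le_antiderivative[where F = ln]) auto
  also have "\<dots> \<le> 1 + ln t"
    using assms False by simp
  finally show ?thesis .
qed

section \<open>Probabilities of intervals under the density \<open>f\<^sub>p\<close>\<close>

lemma prob_fp_gt_one:
  assumes "distributed M lborel Y (fp p)"
  shows "measure M {\<omega> \<in> space M. 1 < Y \<omega>} = 0"
proof -
  have "emeasure M (Y -` {1<..} \<inter> space M) = (\<integral>\<^sup>+x. fp p x * indicator {1<..} x \<partial>lborel)"
    by (rule distributed_emeasure[OF assms]) auto
  also have "(\<lambda>x. fp p x * indicator {1<..} x) = (\<lambda>x. 0)"
    by (auto simp: fp_def indicator_def)
  finally show ?thesis
    by (simp add: measure_def vimage_def Int_def conj_commute)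
qed

text \<open>The distribution function is \<open>c\<^sup>p\<close> on \<open>[0, 1]\<close>; we only need the upper bound, obtained
  from the complementary mass \<open>\<integral>\<^sub>c\<^sup>1 p t\<^sup>p\<^sup>-\<^sup>1 dt = 1 - c\<^sup>p\<close>.\<close>

lemma prob_fp_less:
  assumes "prob_space M" "distributed M lborel Y (fp p)" "0 < p" "0 < c"
  shows "measure M {\<omega> \<in> space M. Y \<omega> < c} \<le> c powr p"
proof -
  interpret prob_space M by fact
  show ?thesis
  proof (cases "c < 1")
    case False
    have "measure M {\<omega> \<in> space M. Y \<omega> < c} \<le> 1" by simp
    also have "1 \<le> c powr p" using False assms by (simp add: ge_one_powr_ge_zero)
    finally show ?thesis .
  next
    case True
    have "emeasure M (Y -` {c..1} \<inter> space M) = (\<integral>\<^sup>+x. fp p x * indicator {c..1} x \<partial>lborel)"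
      by (rule distributed_emeasure[OF assms(2)]) auto
    also have "\<dots> = (\<integral>\<^sup>+x. ennreal (p * x powr (p - 1)) * indicator {c..1} x \<partial>lborel)"
      by (rule nn_integral_cong) (use assms in \<open>auto simp: fp_def indicator_def\<close>)
    also have "\<dots> = ennreal (1 powr p - c powr p)"
    proof (rule nn_integral_has_integral_lebesgue')
      show "\<And>x. x \<in> {c..1} \<Longrightarrow> 0 \<le> p * x powr (p - 1)" using assms by simp
      show "((\<lambda>x. p * x powr (p - 1)) has_integral 1 powr p - c powr p) {c..1}"
      proof (rule fundamental_theorem_of_calculus)
        fix x assume "x \<in> {c..1}"
        then have "((\<lambda>x. x powr p) has_real_derivative p * x powr (p - 1)) (at x)"
          using assms by (auto intro!: derivative_eq_intros)
        then show "((\<lambda>x. x powr p) has_vector_derivative p * x powr (p - 1)) (at x within {c..1})"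
          by (simp add: has_real_derivative_iff_has_vector_derivative has_vector_derivative_at_within)
      qed (use True in simp)
    qed
    finally have upper: "measure M {\<omega> \<in> space M. c \<le> Y \<omega> \<and> Y \<omega> \<le> 1} = 1 - c powr p"
      using True assms by (simp add: emeasure_eq_measure powr_le1 vimage_def Int_def conj_commute)
    have "Y \<in> measurable M borel"
      using assms(2) by (simp add: distributed_def)
    then have "measure M {\<omega> \<in> space M. Y \<omega> < c} + measure M {\<omega> \<in> space M. c \<le> Y \<omega> \<and> Y \<omega> \<le> 1}
        = measure M ({\<omega> \<in> space M. Y \<omega> < c} \<union> {\<omega> \<in> space M. c \<le> Y \<omega> \<and> Y \<omega> \<le> 1})"
      by (intro finite_measure_Union[symmetric]) auto
    also have "\<dots> \<le> 1" by simp
    finally show ?thesis using upper by simp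
  qed
qed

text \<open>For \<open>p \<le> 1\<close> the density is decreasing, so an interval \<open>[u, v)\<close> has mass at most
  \<open>f\<^sub>p(u) (v - u)\<close>.\<close>

lemma prob_fp_interval:
  assumes "distributed M lborel Y (fp p)" "0 < p" "p \<le> 1" "0 < u" "u \<le> v"
  shows "measure M {\<omega> \<in> space M. u \<le> Y \<omega> \<and> Y \<omega> < v} \<le> p * u powr (p - 1) * (v - u)"
proof -
  have "emeasure M (Y -` {u..<v} \<inter> space M) = (\<integral>\<^sup>+x. fp p x * indicator {u..<v} x \<partial>lborel)"
    by (rule distributed_emeasure[OF assms(1)]) auto
  also have "\<dots> \<le> (\<integral>\<^sup>+x. ennreal (p * u powr (p - 1)) * indicator {u..<v} x \<partial>lborel)"
  proof (rule nn_integral_mono)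
    fix x
    have "p * x powr (p - 1) \<le> p * u powr (p - 1)" if "x \<in> {u..<v}"
      using that assms by (intro mult_left_mono powr_mono2') auto
    then show "fp p x * indicator {u..<v} x \<le> ennreal (p * u powr (p - 1)) * indicator {u..<v} x"
      using assms by (auto simp: fp_def indicator_def intro: ennreal_leI)
  qed
  also have "\<dots> = ennreal (p * u powr (p - 1) * (v - u))"
    using assms by (simp add: nn_integral_cmult_indicator ennreal_mult)
  finally show ?thesis
    using assms by (simp add: measure_def enn2real_leI vimage_def Int_def conj_commute)
qed

section \<open>Covering clusters by cells\<close>

definition cell :: "real \<Rightarrow> nat \<Rightarrow> real set" where
  "cell d k = (if k \<le> 1 then {..<3 * d} else {(real k - 1) * d..<(real k + 2) * d})"

definition cell_bound :: "real \<Rightarrow> real \<Rightarrow> nat \<Rightarrow> real" where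
  "cell_bound p d k =
     (if k \<le> 1 then (3 * d) powr p else 3 * p * d powr p * (real k - 1) powr (p - 1))"

text \<open>Points within distance \<open>d\<close> of a point \<open>y\<^sub>0 \<le> 1\<close> lie in a common cell with
  \<open>k \<le> \<lceil>1/d\<rceil>\<close>: take \<open>k = \<lfloor>y\<^sub>0/d\<rfloor>\<close>, or \<open>k = 0\<close> when \<open>y\<^sub>0 < 2d\<close>.\<close>

lemma cell_cover:
  fixes y :: "nat \<Rightarrow> real"
  assumes "0 < d" "y 0 \<le> 1" "\<And>i. i < n \<Longrightarrow> \<bar>y i - y 0\<bar> \<le> d"
  shows "\<exists>k \<le> nat \<lceil>1 / d\<rceil>. \<forall>i < n. y i \<in> cell d k"
proof (cases "y 0 < 2 * d")
  case True
  then have "\<forall>i < n. y i \<in> cell d 0"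
    using assms(3) by (fastforce simp: cell_def)
  then show ?thesis by blast
next
  case False
  define k where "k = nat \<lfloor>y 0 / d\<rfloor>"
  have "2 \<le> y 0 / d"
    using False assms(1) by (simp add: field_simps)
  then have k: "real k = real_of_int \<lfloor>y 0 / d\<rfloor>" "2 \<le> k"
    unfolding k_def by (auto simp: le_nat_iff le_floor_iff)
  have "real k \<le> y 0 / d" "y 0 / d < real k + 1"
    using k(1) by linarith+
  then have "real k * d \<le> y 0" "y 0 < (real k + 1) * d"
    using assms(1) by (simp_all add: field_simps)
  then have "\<forall>i < n. y i \<in> cell d k"
    using assms(3) k(2) by (fastforce simp: cell_def algebra_simps)
  moreover have "k \<le> nat \<lceil>1 / d\<rceil>"
    unfolding k_def using assms(1,2)
    by (intro nat_mono floor_le_ceiling[THEN order_trans] ceiling_mono divide_right_mono) auto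
  ultimately show ?thesis by blast
qed

lemma prob_fp_cell:
  assumes "prob_space M" "distributed M lborel Y (fp p)" "0 < p" "p \<le> 1" "0 < d"
  shows "measure M {\<omega> \<in> space M. Y \<omega> \<in> cell d k} \<le> cell_bound p d k"
proof (cases "k \<le> 1")
  case True
  then show ?thesis
    using prob_fp_less[OF assms(1-3), of "3 * d"] assms(5) by (simp add: cell_def cell_bound_def)
next
  case False
  have "measure M {\<omega> \<in> space M. Y \<omega> \<in> cell d k}
      \<le> p * ((real k - 1) * d) powr (p - 1) * ((real k + 2) * d - (real k - 1) * d)"
    using prob_fp_interval[OF assms(2-4), of "(real k - 1) * d" "(real k + 2) * d"] False assms(5)
    by (simp add: cell_def)
  also have "\<dots> = 3 * p * (d powr (p - 1) * d) * (real k - 1) powr (p - 1)"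
  proof -
    have "((real k - 1) * d) powr (p - 1) = (real k - 1) powr (p - 1) * d powr (p - 1)"
      using False assms(5) by (simp add: powr_mult)
    then show ?thesis by (simp add: algebra_simps)
  qed
  also have "\<dots> = cell_bound p d k"
    using False assms(5) by (simp add: cell_bound_def powr_diff)
  finally show ?thesis .
qed

lemma cell_bound_power:
  assumes "0 < d" "2 \<le> k"
  shows "cell_bound p d k ^ n = (3 * p) ^ n * d powr (p * n) * real (k - 1) powr (- (n * (1 - p)))"
proof -
  have "cell_bound p d k ^ n = (3 * p) ^ n * (d powr p) ^ n * (real (k - 1) powr (p - 1)) ^ n"
    using assms by (simp add: cell_bound_def power_mult_distrib)
  also have "\<dots> = (3 * p) ^ n * d powr (p * n) * real (k - 1) powr (- (n * (1 - p)))"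
    using assms by (simp add: powr_realpow[symmetric] powr_powr algebra_simps)
  finally show ?thesis .
qed

lemma cell_bound_sum:
  assumes "0 < d" "1 \<le> K"
  shows "(\<Sum>k\<le>K. cell_bound p d k ^ n)
    = 2 * (3 * d) powr (p * n) + (3 * p) ^ n * d powr (p * n) * power_sum (n * (1 - p)) (K - 1)"
proof -
  have "{..K} = {0, 1} \<union> {2..K}"
    using assms(2) by auto
  then have "(\<Sum>k\<le>K. cell_bound p d k ^ n)
      = (\<Sum>k\<in>{0, 1}. cell_bound p d k ^ n) + (\<Sum>k = 2..K. cell_bound p d k ^ n)"
    by (simp only:) (rule sum.union_disjoint, auto)
  also have "(\<Sum>k\<in>{0, 1}. cell_bound p d k ^ n) = 2 * (3 * d) powr (p * n)"
    using assms(1) by (simp add: cell_bound_def powr_realpow[symmetric] powr_powr mult.commute)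
  also have "(\<Sum>k = 2..K. cell_bound p d k ^ n)
      = (3 * p) ^ n * d powr (p * n) * (\<Sum>k = 2..K. real (k - 1) powr (- (n * (1 - p))))"
    unfolding sum_distrib_left using assms(1) by (intro sum.cong) (simp_all add: cell_bound_power)
  also have "(\<Sum>k = 2..K. real (k - 1) powr (- (n * (1 - p)))) = power_sum (n * (1 - p)) (K - 1)"
    unfolding power_sum_def using assms(2)
    by (intro sum.reindex_bij_witness[of _ Suc "\<lambda>k. k - 1"]) auto
  finally show ?thesis .
qed

lemma sample_Q_close_to_first:
  assumes "sample_Q n y \<le> x" "i < n"
  shows "\<bar>y i - y 0\<bar> \<le> 2 * sqrt x"
proof -
  define mean where "mean = (\<Sum>j<n. y j) / real n"
  have "\<bar>y j - mean\<bar> \<le> sqrt x" if "j < n" for j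
  proof -
    have "(y j - mean)\<^sup>2 \<le> sample_Q n y"
      unfolding sample_Q_def mean_def using that by (intro member_le_sum) auto
    then show ?thesis
      using assms(1) real_sqrt_le_mono[of "(y j - mean)\<^sup>2" x] by simp
  qed
  from this[of i] this[of 0] show ?thesis
    using assms(2) by linarith
qed

section \<open>The probabilistic estimate\<close>

locale iid_fp_sample = prob_space M for M :: "'a measure" +
  fixes X :: "nat \<Rightarrow> 'a \<Rightarrow> real" and p :: real and n :: nat
  assumes p_pos: "0 < p" and p_le_1: "p \<le> 1" and n_pos: "0 < n"
    and indep: "indep_vars (\<lambda>_. borel) X {..<n}"
    and distr: "\<And>i. i < n \<Longrightarrow> distributed M lborel (X i) (fp p)"
begin

lemma random_variable_X: "i < n \<Longrightarrow> random_variable borel (X i)"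
  using distr by (simp add: distributed_def)

lemma all_in_eq_INT: "{\<omega> \<in> space M. \<forall>i < n. X i \<omega> \<in> A} = (\<Inter>i\<in>{..<n}. X i -` A \<inter> space M)"
  using n_pos by auto

lemma all_in_event:
  assumes "A \<in> sets borel"
  shows "{\<omega> \<in> space M. \<forall>i < n. X i \<omega> \<in> A} \<in> events"
  unfolding all_in_eq_INT using assms random_variable_X n_pos
  by (intro sets.finite_INT) (auto intro: measurable_sets)

lemma prob_all_in:
  assumes "A \<in> sets borel"
  shows "prob {\<omega> \<in> space M. \<forall>i < n. X i \<omega> \<in> A} = (\<Prod>i<n. prob {\<omega> \<in> space M. X i \<omega> \<in> A})"
proof -
  have "prob (\<Inter>i\<in>{..<n}. X i -` A \<inter> space M) = (\<Prod>i<n. prob (X i -` A \<inter> space M))"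
  proof (rule indep_setsD)
    show "indep_sets (\<lambda>i. {X i -` A \<inter> space M | A. A \<in> sets borel}) {..<n}"
      using indep by (simp add: indep_vars_def2)
  qed (use n_pos assms in auto)
  then show ?thesis
    unfolding all_in_eq_INT by (simp add: vimage_def Int_def conj_commute)
qed

text \<open>The key estimate: the sample is clustered within \<open>d\<close> of \<open>X\<^sub>0\<close> only if it lies in one
  cell (or \<open>X\<^sub>0 > 1\<close>, a null event); a union bound over the cells and independence give
  the bound.\<close>

lemma prob_clustered:
  assumes "0 < d"
  shows "prob {\<omega> \<in> space M. \<forall>i < n. \<bar>X i \<omega> - X 0 \<omega>\<bar> \<le> d}
    \<le> 2 * (3 * d) powr (p * n) + (3 * p) ^ n * d powr (p * n) * power_sum (n * (1 - p)) (nat \<lceil>1 / d\<rceil> - 1)"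
proof -
  define K where "K = nat \<lceil>1 / d\<rceil>"
  define E where "E k = {\<omega> \<in> space M. \<forall>i < n. X i \<omega> \<in> cell d k}" for k
  define C where "C = X 0 -` {1<..} \<inter> space M"
  have E_ev: "E k \<in> events" for k
    unfolding E_def by (rule all_in_event) (simp add: cell_def)
  have C_ev: "C \<in> events"
    unfolding C_def using random_variable_X n_pos by (intro measurable_sets) auto
  have "{\<omega> \<in> space M. \<forall>i < n. \<bar>X i \<omega> - X 0 \<omega>\<bar> \<le> d} \<subseteq> (\<Union>k\<le>K. E k) \<union> C"
  proof safe
    fix \<omega> assume \<omega>: "\<omega> \<in> space M" "\<forall>i < n. \<bar>X i \<omega> - X 0 \<omega>\<bar> \<le> d" "\<omega> \<notin> C"
    then obtain k where "k \<le> K" "\<forall>i < n. X i \<omega> \<in> cell d k"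
      using cell_cover[OF assms, of "\<lambda>i. X i \<omega>" n] by (auto simp: C_def K_def not_less)
    then show "\<omega> \<in> (\<Union>k\<le>K. E k)"
      using \<omega>(1) by (auto simp: E_def)
  qed
  then have "prob {\<omega> \<in> space M. \<forall>i < n. \<bar>X i \<omega> - X 0 \<omega>\<bar> \<le> d} \<le> prob ((\<Union>k\<le>K. E k) \<union> C)"
    using E_ev C_ev by (intro finite_measure_mono) auto
  also have "\<dots> \<le> prob (\<Union>k\<le>K. E k) + prob C"
    using E_ev C_ev by (intro measure_Un_le) auto
  also have "prob C = 0"
    unfolding C_def using prob_fp_gt_one[OF distr] n_pos by (simp add: vimage_def Int_def conj_commute)
  also have "prob (\<Union>k\<le>K. E k) \<le> (\<Sum>k\<le>K. prob (E k))"
    using E_ev by (intro finite_measure_subadditive_finite) auto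
  also have "\<dots> \<le> (\<Sum>k\<le>K. cell_bound p d k ^ n)"
  proof (rule sum_mono)
    fix k
    have "prob (E k) = (\<Prod>i<n. prob {\<omega> \<in> space M. X i \<omega> \<in> cell d k})"
      unfolding E_def by (rule prob_all_in) (simp add: cell_def)
    also have "\<dots> \<le> (\<Prod>i<n. cell_bound p d k)"
      using prob_fp_cell[OF prob_space_axioms distr p_pos p_le_1 assms]
      by (intro prod_mono) auto
    finally show "prob (E k) \<le> cell_bound p d k ^ n" by simp
  qed
  also have "\<dots> = 2 * (3 * d) powr (p * n) + (3 * p) ^ n * d powr (p * n) * power_sum (n * (1 - p)) (K - 1)"
    using assms by (intro cell_bound_sum) (auto simp: K_def Suc_le_eq)
  finally show ?thesis
    by (simp add: K_def)
qed

end

section \<open>Asymptotics as \<open>x \<rightarrow> 0\<^sup>+\<close>\<close>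

text \<open>With \<open>d = 2\<surd>x\<close>, the power sum in the estimate runs up to \<open>cell_count x \<le> 1/\<surd>x\<close>.\<close>

definition cell_count :: "real \<Rightarrow> nat" where
  "cell_count x = nat \<lceil>1 / (2 * sqrt x)\<rceil> - 1"

lemma cell_count_le:
  assumes "0 < x"
  shows "real (cell_count x) \<le> 1 / sqrt x"
proof -
  have "0 < 1 / (2 * sqrt x)"
    using assms by simp
  then have "real (cell_count x) \<le> 1 / (2 * sqrt x)"
    unfolding cell_count_def by linarith
  also have "\<dots> \<le> 1 / sqrt x"
    using assms by (simp add: field_simps)
  finally show ?thesis .
qed

context iid_fp_sample
begin

lemma small_Q_bigo:
  "(\<lambda>x. prob {\<omega> \<in> space M. sample_Q n (\<lambda>i. X i \<omega>) \<le> x})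
     \<in> O[at_right 0](\<lambda>x. x powr (p * n / 2) * (1 + power_sum (n * (1 - p)) (cell_count x)))"
proof (rule bigoI)
  define e where "e = p * n"
  define S where "S x = power_sum (n * (1 - p)) (cell_count x)" for x
  define C where "C = (2 * 3 powr e + (3 * p) ^ n) * 2 powr e"
  have "prob {\<omega> \<in> space M. sample_Q n (\<lambda>i. X i \<omega>) \<le> x} \<le> C * (x powr (e / 2) * (1 + S x))"
    if "0 < x" for x
  proof -
    define d where "d = 2 * sqrt x"
    have d: "0 < d" "d powr e = 2 powr e * x powr (e / 2)"
      using \<open>0 < x\<close> by (simp_all add: d_def powr_mult powr_half_sqrt[symmetric] powr_powr)
    have "prob {\<omega> \<in> space M. sample_Q n (\<lambda>i. X i \<omega>) \<le> x}
        \<le> prob {\<omega> \<in> space M. \<forall>i < n. \<bar>X i \<omega> - X 0 \<omega>\<bar> \<le> d}"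
      using sample_Q_close_to_first[of n _ x] random_variable_X n_pos
      by (intro finite_measure_mono) (auto simp: d_def)
    also have "\<dots> \<le> 2 * (3 * d) powr e + (3 * p) ^ n * d powr e * S x"
      using prob_clustered[OF d(1)] by (simp add: S_def e_def d_def cell_count_def)
    also have "\<dots> \<le> (2 * 3 powr e + (3 * p) ^ n) * d powr e * (1 + S x)"
      using d(1) p_pos power_sum_nonneg[of "n * (1 - p)" "cell_count x"]
      by (simp add: S_def powr_mult algebra_simps)
    also have "\<dots> = C * (x powr (e / 2) * (1 + S x))"
      by (simp add: d(2) C_def)
    finally show ?thesis .
  qed
  then show "\<forall>\<^sub>F x in at_right 0. norm (prob {\<omega> \<in> space M. sample_Q n (\<lambda>i. X i \<omega>) \<le> x})
      \<le> C * norm (x powr (p * n / 2) * (1 + power_sum (n * (1 - p)) (cell_count x)))"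
    unfolding eventually_at_right_field
    by (intro exI[of _ 1]) (auto simp: S_def e_def power_sum_nonneg)
qed

end

lemma power_sum_bigo_gt1:
  assumes "1 < a"
  shows "(\<lambda>x. x powr r * (1 + power_sum a (cell_count x))) \<in> O[at_right 0](\<lambda>x. x powr r)"
proof (rule bigoI)
  have "x powr r * (1 + power_sum a (cell_count x)) \<le> x powr r * (1 + a / (a - 1))" for x
    using power_sum_gt1[OF assms] by (intro mult_left_mono) auto
  then show "\<forall>\<^sub>F x in at_right 0.
      norm (x powr r * (1 + power_sum a (cell_count x))) \<le> (1 + a / (a - 1)) * norm (x powr r)"
    by (intro always_eventually) (auto simp: power_sum_nonneg mult.commute)
qed

lemma power_sum_bigo_lt1:
  assumes "0 \<le> a" "a < 1"
  shows "(\<lambda>x. x powr r * (1 + power_sum a (cell_count x)))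
    \<in> O[at_right 0](\<lambda>x. x powr (r - (1 - a) / 2))"
proof (rule bigoI)
  have "x powr r * (1 + power_sum a (cell_count x)) \<le> (1 + 1 / (1 - a)) * x powr (r - (1 - a) / 2)"
    if "0 < x" "x \<le> 1" for x
  proof -
    have "power_sum a (cell_count x) \<le> (1 / sqrt x) powr (1 - a) / (1 - a)"
      using power_sum_lt1[OF assms cell_count_le[OF \<open>0 < x\<close>]] .
    also have "(1 / sqrt x) powr (1 - a) = x powr ((a - 1) / 2)"
    proof -
      have "1 / sqrt x = x powr (- 1 / 2)"
        using that by (simp add: powr_minus_divide powr_half_sqrt)
      moreover have "- 1 / 2 * (1 - a) = (a - 1) / 2"
        by (simp add: field_simps)
      ultimately show ?thesis
        by (simp only: powr_powr)
    qed
    finally have "x powr r * power_sum a (cell_count x) \<le> x powr r * (x powr ((a - 1) / 2) / (1 - a))"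
      by (intro mult_left_mono) auto
    also have "\<dots> = x powr (r - (1 - a) / 2) / (1 - a)"
      using that by (simp add: powr_add[symmetric] field_simps)
    finally have "x powr r * power_sum a (cell_count x) \<le> x powr (r - (1 - a) / 2) / (1 - a)" .
    moreover have "x powr r \<le> x powr (r - (1 - a) / 2)"
      using that assms by (intro powr_mono') auto
    ultimately show ?thesis
      by (simp add: algebra_simps)
  qed
  then show "\<forall>\<^sub>F x in at_right 0. norm (x powr r * (1 + power_sum a (cell_count x)))
      \<le> (1 + 1 / (1 - a)) * norm (x powr (r - (1 - a) / 2))"
    unfolding eventually_at_right_field
    by (intro exI[of _ 1]) (auto simp: power_sum_nonneg)
qed

lemma power_sum_bigo_eq1:
  "(\<lambda>x. x powr r * (1 + power_sum 1 (cell_count x))) \<in> O[at_right 0](\<lambda>x. x powr r * ln (1 / x))"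
proof (rule bigoI)
  have "norm (x powr r * (1 + power_sum 1 (cell_count x))) \<le> 3 * norm (x powr r * ln (1 / x))"
    if "0 < x" "x < exp (- 1)" for x
  proof -
    have "ln x < - 1"
      using that ln_less_cancel_iff[of x "exp (- 1)"] by simp
    then have L: "1 \<le> ln (1 / x)"
      using that by (simp add: ln_div)
    have "exp (- 1) < (1 :: real)"
      by simp
    then have "x < 1"
      using that by linarith
    then have "1 \<le> 1 / sqrt x"
      using that by simp
    then have "power_sum 1 (cell_count x) \<le> 1 + ln (1 / sqrt x)"
      using power_sum_eq1 cell_count_le[OF \<open>0 < x\<close>] by simp
    also have "ln (1 / sqrt x) = ln (1 / x) / 2"
      using that by (simp add: ln_div ln_sqrt)
    finally have "1 + power_sum 1 (cell_count x) \<le> 3 * ln (1 / x)"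
      using L by linarith
    then have "x powr r * (1 + power_sum 1 (cell_count x)) \<le> x powr r * (3 * ln (1 / x))"
      by (rule mult_left_mono) simp
    then show ?thesis
      using L by (simp add: power_sum_nonneg abs_mult mult.left_commute)
  qed
  moreover have "0 < exp (- 1 :: real)"
    by simp
  ultimately show "\<forall>\<^sub>F x in at_right 0. norm (x powr r * (1 + power_sum 1 (cell_count x)))
      \<le> 3 * norm (x powr r * ln (1 / x))"
    unfolding eventually_at_right_field
    by (intro exI[of _ "exp (- 1)"]) auto
qed

context iid_fp_sample
begin

text \<open>The three cases of the theorem, in terms of \<open>a = n(1 - p)\<close>; note \<open>pn + a = n\<close>.\<close>

lemma small_Q_bigo_gt1:
  assumes "1 < n * (1 - p)"
  shows "(\<lambda>x. prob {\<omega> \<in> space M. sample_Q n (\<lambda>i. X i \<omega>) \<le> x}) \<in> O[at_right 0](\<lambda>x. x powr (p * n / 2))"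
  using small_Q_bigo power_sum_bigo_gt1[OF assms] by (rule landau_o.big_trans)

lemma small_Q_bigo_lt1:
  assumes "n * (1 - p) < 1"
  shows "(\<lambda>x. prob {\<omega> \<in> space M. sample_Q n (\<lambda>i. X i \<omega>) \<le> x})
    \<in> O[at_right 0](\<lambda>x. x powr ((real n - 1) / 2))"
proof -
  have exponent: "p * n / 2 - (1 - n * (1 - p)) / 2 = (real n - 1) / 2"
    by (simp add: algebra_simps diff_divide_distrib)
  have "0 \<le> n * (1 - p)"
    using p_le_1 by simp
  then show ?thesis
    using landau_o.big_trans[OF small_Q_bigo power_sum_bigo_lt1[OF _ assms]]
    by (simp only: exponent)
qed

lemma small_Q_bigo_eq1:
  assumes "n * (1 - p) = 1"
  shows "(\<lambda>x. prob {\<omega> \<in> space M. sample_Q n (\<lambda>i. X i \<omega>) \<le> x})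
    \<in> O[at_right 0](\<lambda>x. x powr ((real n - 1) / 2) * ln (1 / x))"
proof -
  have "p * n / 2 = (real n - 1) / 2"
    using assms by (simp add: algebra_simps)
  with assms small_Q_bigo have "(\<lambda>x. prob {\<omega> \<in> space M. sample_Q n (\<lambda>i. X i \<omega>) \<le> x})
      \<in> O[at_right 0](\<lambda>x. x powr ((real n - 1) / 2) * (1 + power_sum 1 (cell_count x)))"
    by (simp only:)
  then show ?thesis
    using power_sum_bigo_eq1 by (rule landau_o.big_trans)
qed

end

theorem lemma2:
  fixes M :: "'a measure" and X :: "nat \<Rightarrow> 'a \<Rightarrow> real" and p :: real and n :: nat
  assumes "prob_space M"
    and "0 < p" and "p < 1" and "n \<ge> 2"
    and "prob_space.indep_vars M (\<lambda>_. borel) X {..<n}"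
    and "\<And>i. i < n \<Longrightarrow> distributed M lborel (X i) (fp p)"
  shows "(p * real n \<noteq> real n - 1 \<longrightarrow>
            (\<lambda>x. measure M {\<omega> \<in> space M. sample_Q n (\<lambda>i. X i \<omega>) \<le> x})
              \<in> O[at_right 0](\<lambda>x. x powr (min (p * real n) (real n - 1) / 2)))
       \<and> (p * real n = real n - 1 \<longrightarrow>
            (\<lambda>x. measure M {\<omega> \<in> space M. sample_Q n (\<lambda>i. X i \<omega>) \<le> x})
              \<in> O[at_right 0](\<lambda>x. x powr ((real n - 1) / 2) * ln (1 / x)))"
proof -
  interpret iid_fp_sample M X p n
    using assms by (intro iid_fp_sample.intro iid_fp_sample_axioms.intro) simp_all
  have regimes: "p * n < real n - 1 \<longleftrightarrow> 1 < n * (1 - p)" "p * n = real n - 1 \<longleftrightarrow> n * (1 - p) = 1"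
    by (auto simp: algebra_simps)
  show ?thesis
  proof (intro conjI impI)
    assume "p * n \<noteq> real n - 1"
    then consider "1 < n * (1 - p)" "min (p * n) (real n - 1) = p * n"
      | "n * (1 - p) < 1" "min (p * n) (real n - 1) = real n - 1"
      using regimes by (fastforce simp: min_def)
    then show "(\<lambda>x. prob {\<omega> \<in> space M. sample_Q n (\<lambda>i. X i \<omega>) \<le> x})
        \<in> O[at_right 0](\<lambda>x. x powr (min (p * n) (real n - 1) / 2))"
      by cases (simp_all add: small_Q_bigo_gt1 small_Q_bigo_lt1)
  qed (use small_Q_bigo_eq1 regimes in simp)
qed

end
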